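(* Let $(X,\mathrm{dist})$ be a distance space, $r_1<r_2$, and $\mathcal{H}$ an $(r_1,r_2,p_1,p_2)$-sensitive family of hash functions on $X$ with $0<p_1\le 1$. Let $k, L$ be positive integers, let $\varepsilon > 0$, and let $m$ be an integer with $m \ge \left\lceil \frac{1-p_1}{p_1}\cdot\frac{k}{\ln(1+\varepsilon)}\right\rceil$, $m\ge 1$. Let $h_{i,j}$ for $i\in[k]$, $j\in[m]$ be sampled independently from $\mathcal{H}$, and let $f_1,\dots,f_k\colon [L]\to[m]$ be pairwise independent hash functions, independent of each other and of the $h_{i,j}$. For $l\in[L]$ define $g_l(x) = (h_{1,f_1(l)}(x), \dots, h_{k,f_k(l)}(x))$. Then for every pair of points $x,y\in X$ with $\mathrm{dist}(x,y)\le r_1$, writing $p = \Pr_{h\sim\mathcal{H}}[h(x)=h(y)]$ and $\mu = L p^k$, we have $$\Pr[\nexists\, l\in[L] \colon g_l(x) = g_l(y)] \le \frac{1+\varepsilon\mu}{1+(1+\varepsilon)\mu}.$$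
   Context: Here $[n]=\{1,\dots,n\}$. A distribution $\mathcal{H}$ over functions $h\colon X \to R$ is $(r_1, r_2, p_1, p_2)$-sensitive if for all $x, y \in X$ and $h \sim \mathcal{H}$: if $\mathrm{dist}(x,y) \le r_1$ then $\Pr[h(x)=h(y)] \ge p_1$, and if $\mathrm{dist}(x,y) \ge r_2$ then $\Pr[h(x)=h(y)] \le p_2$. A family of functions $f\colon[L]\to[m]$ is pairwise independent if for distinct $l\neq l'$ the pair $(f(l),f(l'))$ is uniformly distributed on $[m]^2$. *)

theory Defs
  imports "HOL-Probability.Probability"
begin

definition distance_space :: "('a \<Rightarrow> 'a \<Rightarrow> real) \<Rightarrow> bool" where
  "distance_space d \<longleftrightarrow>
     (\<forall>x y. 0 \<le> d x y) \<and> (\<forall>x y. d x y = d y x) \<and> (\<forall>x. d x x = 0)"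

definition lsh_sensitive ::
  "('a \<Rightarrow> 'a \<Rightarrow> real) \<Rightarrow> real \<Rightarrow> real \<Rightarrow> real \<Rightarrow> real \<Rightarrow> ('a \<Rightarrow> 'b) pmf \<Rightarrow> bool" where
  "lsh_sensitive d r1 r2 p1 p2 H \<longleftrightarrow>
     (\<forall>x y. d x y \<le> r1 \<longrightarrow> measure_pmf.prob H {h. h x = h y} \<ge> p1) \<and>
     (\<forall>x y. d x y \<ge> r2 \<longrightarrow> measure_pmf.prob H {h. h x = h y} \<le> p2)"

definition pairwise_indep_family :: "nat \<Rightarrow> nat \<Rightarrow> (nat \<Rightarrow> nat) pmf \<Rightarrow> bool" where
  "pairwise_indep_family L m F \<longleftrightarrow>
     (\<forall>f\<in>set_pmf F. \<forall>l\<in>{1..L}. f l \<in> {1..m}) \<and>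
     (\<forall>l\<in>{1..L}. \<forall>l'\<in>{1..L}. l \<noteq> l' \<longrightarrow>
        map_pmf (\<lambda>f. (f l, f l')) F = pmf_of_set ({1..m} \<times> {1..m}))"

end

theory Submission
  imports Defs
begin

(* Let Z count the indices l with g_l(x) = g_l(y). Given the f_i, the collision events are
   governed by independent samples h_{i,j}, so E Z = L p^k = \<mu>; for l \<noteq> l' the two buckets share
   the function at position i exactly when f_i(l) = f_i(l'), which by pairwise independence has
   probability 1/m, whence E[Z^2] = \<mu> + L(L-1)(p^2 + (p - p^2)/m)^k \<le> \<mu> + (1+\<epsilon>)\<mu>^2 by the choice
   of m. Integrating the pointwise bound 1[Z = 0] \<le> (1 - aZ)^2 with a = 1/(1 + (1+\<epsilon>)\<mu>) gives
   the claim. *)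

lemma measure_pair_pmf_conv_expectation:
  "measure_pmf.prob (pair_pmf A B) E =
     measure_pmf.expectation B (\<lambda>b. measure_pmf.prob A {a. (a, b) \<in> E})"
proof -
  have "emeasure (pair_pmf A B) E = (\<integral>\<^sup>+\<omega>. indicator E \<omega> \<partial>pair_pmf A B)"
    by simp
  also have "\<dots> = (\<integral>\<^sup>+b. \<integral>\<^sup>+a. indicator E (a, b) \<partial>A \<partial>B)"
    by (subst pair_commute_pmf) (simp add: nn_integral_pair_pmf')
  also have "\<dots> = (\<integral>\<^sup>+b. ennreal (measure_pmf.prob A {a. (a, b) \<in> E}) \<partial>B)"
    by (intro nn_integral_cong) (simp add: measure_pmf.emeasure_eq_measure[symmetric]
          nn_integral_indicator[symmetric] indicator_def)
  also have "\<dots> = ennreal (measure_pmf.expectation B (\<lambda>b. measure_pmf.prob A {a. (a, b) \<in> E}))"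
    by (intro nn_integral_eq_integral measure_pmf.integrable_const_bound[where B=1]) auto
  finally show ?thesis
    by (simp add: measure_pmf.emeasure_eq_measure Bochner_Integration.integral_nonneg)
qed

lemma measure_Pi_pmf_iid_sections:
  assumes "finite K" "finite J" "\<And>i. i \<in> K \<Longrightarrow> S i \<subseteq> J"
  shows "measure_pmf.prob (Pi_pmf (K \<times> J) dflt (\<lambda>_. H)) {h. \<forall>i\<in>K. \<forall>j\<in>S i. h (i, j) \<in> B}
           = (\<Prod>i\<in>K. measure_pmf.prob H B ^ card (S i))"
proof -
  define B' where "B' = (\<lambda>(i, j). if j \<in> S i then B else UNIV)"
  have "{h. \<forall>i\<in>K. \<forall>j\<in>S i. h (i, j) \<in> B} = Pi (K \<times> J) B'"
    using assms(3) by (auto simp: B'_def Pi_def)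
  then have "measure_pmf.prob (Pi_pmf (K \<times> J) dflt (\<lambda>_. H)) {h. \<forall>i\<in>K. \<forall>j\<in>S i. h (i, j) \<in> B}
      = (\<Prod>ij\<in>K \<times> J. measure_pmf.prob H (B' ij))"
    using assms(1,2) by (simp add: measure_Pi_pmf_Pi)
  also have "\<dots> = (\<Prod>ij\<in>K \<times> J. if snd ij \<in> S (fst ij) then measure_pmf.prob H B else 1)"
    by (intro prod.cong refl) (auto simp: B'_def)
  also have "\<dots> = (\<Prod>i\<in>K. \<Prod>j\<in>J. if j \<in> S i then measure_pmf.prob H B else 1)"
    by (simp add: prod.cartesian_product case_prod_unfold)
  also have "\<dots> = (\<Prod>i\<in>K. measure_pmf.prob H B ^ card (S i))"
    using assms by (intro prod.cong refl) (simp add: prod.If_cases Int_absorb1)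
  finally show ?thesis .
qed

lemma expectation_pmf_of_set_diagonal:
  fixes u v :: real
  assumes "finite J" "J \<noteq> {}"
  shows "measure_pmf.expectation (pmf_of_set (J \<times> J)) (\<lambda>(a, b). if a = b then u else v)
           = v + (u - v) / card J"
proof -
  have "(\<Sum>(a, b)\<in>J \<times> J. if a = b then u else v) = (\<Sum>a\<in>J. \<Sum>b\<in>J. v + (if a = b then u - v else 0))"
    by (simp add: sum.cartesian_product) (intro sum.cong refl, auto)
  also have "\<dots> = card J * (card J * v + (u - v))"
    using assms(1) by (simp add: sum.distrib)
  finally show ?thesis
    using assms by (simp add: integral_pmf_of_set card_cartesian_product field_simps)
qed

lemma one_plus_power_le_of_ln:
  fixes t \<epsilon> :: real
  assumes "0 \<le> t" "real k * t \<le> ln (1 + \<epsilon>)" "-1 < \<epsilon>"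
  shows "(1 + t) ^ k \<le> 1 + \<epsilon>"
proof -
  have "(1 + t) ^ k \<le> exp t ^ k"
    using assms(1) by (intro power_mono) (auto simp: exp_ge_add_one_self)
  also have "\<dots> = exp (real k * t)" by (simp add: exp_of_nat_mult)
  also have "\<dots> \<le> exp (ln (1 + \<epsilon>))" using assms(2) by simp
  also have "\<dots> = 1 + \<epsilon>" using assms(3) by simp
  finally show ?thesis .
qed

lemma measure_pmf_zero_le_second_moment:
  fixes Z :: "'a \<Rightarrow> real" and \<mu> \<epsilon> :: real
  assumes bounded: "\<And>\<omega>. \<bar>Z \<omega>\<bar> \<le> B"
    and zero: "\<And>\<omega>. \<omega> \<in> E \<Longrightarrow> Z \<omega> = 0"
    and mean: "measure_pmf.expectation M Z = \<mu>" and "0 \<le> \<mu>" "0 \<le> \<epsilon>"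
    and second: "measure_pmf.expectation M (\<lambda>\<omega>. (Z \<omega>)\<^sup>2) \<le> \<mu> + (1 + \<epsilon>) * \<mu>\<^sup>2"
  shows "measure_pmf.prob M E \<le> (1 + \<epsilon> * \<mu>) / (1 + (1 + \<epsilon>) * \<mu>)"
proof -
  have int_Z: "integrable (measure_pmf M) Z"
    using bounded by (intro measure_pmf.integrable_const_bound[where B=B]) auto
  have "\<bar>(Z \<omega>)\<^sup>2\<bar> \<le> B\<^sup>2" for \<omega>
    using power_mono[OF bounded[of \<omega>] abs_ge_zero, of 2] by simp
  then have int_Z2: "integrable (measure_pmf M) (\<lambda>\<omega>. (Z \<omega>)\<^sup>2)"
    by (intro measure_pmf.integrable_const_bound[where B="B\<^sup>2"]) auto
  define a where "a = 1 / (1 + (1 + \<epsilon>) * \<mu>)"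
  have den: "0 < 1 + (1 + \<epsilon>) * \<mu>"
    using \<open>0 \<le> \<mu>\<close> \<open>0 \<le> \<epsilon>\<close> by (simp add: add_pos_nonneg)
  have indicator_le: "indicator E \<omega> \<le> 1 - 2 * a * Z \<omega> + a\<^sup>2 * (Z \<omega>)\<^sup>2" for \<omega>
  proof -
    have "indicator E \<omega> \<le> (1 - a * Z \<omega>)\<^sup>2"
      using zero[of \<omega>] by (cases "\<omega> \<in> E") auto
    then show ?thesis by (simp add: power2_eq_square algebra_simps)
  qed
  have "measure_pmf.prob M E = measure_pmf.expectation M (indicator E)"
    by simp
  also have "\<dots> \<le> measure_pmf.expectation M (\<lambda>\<omega>. 1 - 2 * a * Z \<omega> + a\<^sup>2 * (Z \<omega>)\<^sup>2)"
  proof (rule integral_mono)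
    show "integrable (measure_pmf M) (indicator E :: _ \<Rightarrow> real)"
      by (intro measure_pmf.integrable_const_bound[where B=1]) auto
  qed (use indicator_le int_Z int_Z2 in auto)
  also have "\<dots> = 1 - 2 * a * \<mu> + a\<^sup>2 * measure_pmf.expectation M (\<lambda>\<omega>. (Z \<omega>)\<^sup>2)"
    using int_Z int_Z2 mean by simp
  also have "\<dots> \<le> 1 - 2 * a * \<mu> + a\<^sup>2 * (\<mu> + (1 + \<epsilon>) * \<mu>\<^sup>2)"
    using second by (intro add_left_mono mult_left_mono) auto
  also have "\<dots> = 1 - a * \<mu> + a * \<mu> * (a * (1 + (1 + \<epsilon>) * \<mu>) - 1)"
    by (simp add: power2_eq_square algebra_simps)
  also have "\<dots> = (1 + \<epsilon> * \<mu>) / (1 + (1 + \<epsilon>) * \<mu>)"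
    using den by (simp add: a_def field_simps)
  finally show ?thesis .
qed

(* A sample is a pair (h, f) with h (i, j) = h_{i,j} and f i = f_i, so g_l(x) is the tuple of
   the values h (i, f i l) x. *)
definition lsh_sample ::
  "('a \<Rightarrow> 'b) pmf \<Rightarrow> (nat \<Rightarrow> (nat \<Rightarrow> nat) pmf) \<Rightarrow> nat \<Rightarrow> nat \<Rightarrow>
     ((nat \<times> nat \<Rightarrow> 'a \<Rightarrow> 'b) \<times> (nat \<Rightarrow> nat \<Rightarrow> nat)) pmf" where
  "lsh_sample H F k m =
     pair_pmf (Pi_pmf ({1..k} \<times> {1..m}) undefined (\<lambda>_. H)) (Pi_pmf {1..k} undefined F)"

definition lsh_collision ::
  "nat \<Rightarrow> 'a \<Rightarrow> 'a \<Rightarrow> nat \<Rightarrow> ((nat \<times> nat \<Rightarrow> 'a \<Rightarrow> 'b) \<times> (nat \<Rightarrow> nat \<Rightarrow> nat)) set" where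
  "lsh_collision k x y l = {(h, f). \<forall>i\<in>{1..k}. h (i, f i l) x = h (i, f i l) y}"

definition collision_count ::
  "nat \<Rightarrow> nat \<Rightarrow> 'a \<Rightarrow> 'a \<Rightarrow> (nat \<times> nat \<Rightarrow> 'a \<Rightarrow> 'b) \<times> (nat \<Rightarrow> nat \<Rightarrow> nat) \<Rightarrow> real" where
  "collision_count k L x y \<omega> = (\<Sum>l\<in>{1..L}. indicator (lsh_collision k x y l) \<omega>)"

lemma measure_lsh_sample_Inter_collision:
  assumes "\<Lambda> \<subseteq> {1..L}"
    and range: "\<And>i f l. i \<in> {1..k} \<Longrightarrow> f \<in> set_pmf (F i) \<Longrightarrow> l \<in> {1..L} \<Longrightarrow> f l \<in> {1..m}"
  shows "measure_pmf.prob (lsh_sample H F k m) (\<Inter>l\<in>\<Lambda>. lsh_collision k x y l) =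
           measure_pmf.expectation (Pi_pmf {1..k} undefined F)
             (\<lambda>f. \<Prod>i\<in>{1..k}. measure_pmf.prob H {h. h x = h y} ^ card (f i ` \<Lambda>))"
  unfolding lsh_sample_def measure_pair_pmf_conv_expectation
proof (intro integral_cong_AE AE_pmfI)
  fix f assume f: "f \<in> set_pmf (Pi_pmf {1..k} undefined F)"
  have slice: "{h. (h, f) \<in> (\<Inter>l\<in>\<Lambda>. lsh_collision k x y l)} =
        {h. \<forall>i\<in>{1..k}. \<forall>j\<in>f i ` \<Lambda>. h (i, j) \<in> {g. g x = g y}}"
    by (auto simp: lsh_collision_def)
  have "f i ` \<Lambda> \<subseteq> {1..m}" if "i \<in> {1..k}" for i
    using f that range \<open>\<Lambda> \<subseteq> {1..L}\<close> by (force simp: set_Pi_pmf PiE_dflt_def)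
  then show "measure_pmf.prob (Pi_pmf ({1..k} \<times> {1..m}) undefined (\<lambda>_. H))
               {h. (h, f) \<in> (\<Inter>l\<in>\<Lambda>. lsh_collision k x y l)} =
             (\<Prod>i\<in>{1..k}. measure_pmf.prob H {h. h x = h y} ^ card (f i ` \<Lambda>))"
    unfolding slice by (intro measure_Pi_pmf_iid_sections) auto
qed simp_all

lemma expectation_power_card_pairwise_indep:
  fixes u :: real
  assumes indep: "pairwise_indep_family L m F"
    and "l \<in> {1..L}" "l' \<in> {1..L}" "l \<noteq> l'" "0 < m"
  shows "measure_pmf.expectation F (\<lambda>g. u ^ card {g l, g l'}) = u\<^sup>2 + (u - u\<^sup>2) / m"
proof -
  define \<phi> where "\<phi> = (\<lambda>(a :: nat, b). if a = b then u else u\<^sup>2)"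
  have "measure_pmf.expectation F (\<lambda>g. u ^ card {g l, g l'}) =
        measure_pmf.expectation (map_pmf (\<lambda>g. (g l, g l')) F) \<phi>"
    unfolding \<phi>_def integral_map_pmf
    by (intro Bochner_Integration.integral_cong) (simp_all add: power2_eq_square)
  also have "map_pmf (\<lambda>g. (g l, g l')) F = pmf_of_set ({1..m} \<times> {1..m})"
    using indep assms(2-4) by (simp add: pairwise_indep_family_def)
  also have "measure_pmf.expectation (pmf_of_set ({1..m} \<times> {1..m})) \<phi> = u\<^sup>2 + (u - u\<^sup>2) / m"
    using \<open>0 < m\<close> by (simp add: \<phi>_def expectation_pmf_of_set_diagonal)
  finally show ?thesis .
qed

lemma pairwise_indep_family_range:
  "pairwise_indep_family L m F \<Longrightarrow> f \<in> set_pmf F \<Longrightarrow> l \<in> {1..L} \<Longrightarrow> f l \<in> {1..m}"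
  unfolding pairwise_indep_family_def by blast

lemma measure_lsh_collision:
  assumes "\<And>i. i \<in> {1..k} \<Longrightarrow> pairwise_indep_family L m (F i)" and "l \<in> {1..L}"
  shows "measure_pmf.prob (lsh_sample H F k m) (lsh_collision k x y l) =
           measure_pmf.prob H {h. h x = h y} ^ k"
proof -
  have "measure_pmf.prob (lsh_sample H F k m) (\<Inter>l'\<in>{l}. lsh_collision k x y l') =
        measure_pmf.expectation (Pi_pmf {1..k} undefined F)
          (\<lambda>f. \<Prod>i\<in>{1..k}. measure_pmf.prob H {h. h x = h y} ^ card (f i ` {l}))"
    by (rule measure_lsh_sample_Inter_collision) (blast intro: assms pairwise_indep_family_range)+
  then show ?thesis by simp
qed

lemma measure_lsh_collision_pair:
  fixes H :: "('a \<Rightarrow> 'b) pmf" and x y :: 'a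
  assumes indep: "\<And>i. i \<in> {1..k} \<Longrightarrow> pairwise_indep_family L m (F i)"
    and "l \<in> {1..L}" "l' \<in> {1..L}" "l \<noteq> l'" "0 < m"
  defines "p \<equiv> measure_pmf.prob H {h. h x = h y}"
  shows "measure_pmf.prob (lsh_sample H F k m) (lsh_collision k x y l \<inter> lsh_collision k x y l') =
           (p\<^sup>2 + (p - p\<^sup>2) / m) ^ k"
proof -
  have "measure_pmf.prob (lsh_sample H F k m) (\<Inter>l''\<in>{l, l'}. lsh_collision k x y l'') =
        measure_pmf.expectation (Pi_pmf {1..k} undefined F) (\<lambda>f. \<Prod>i\<in>{1..k}. p ^ card (f i ` {l, l'}))"
    unfolding p_def
    by (rule measure_lsh_sample_Inter_collision) (blast intro: assms(1-3) pairwise_indep_family_range)+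
  also have "\<dots> = measure_pmf.expectation (Pi_pmf {1..k} undefined F)
                      (\<lambda>f. \<Prod>i\<in>{1..k}. p ^ card {f i l, f i l'})"
    by simp
  also have "\<dots> = (\<Prod>i\<in>{1..k}. measure_pmf.expectation (F i) (\<lambda>g. p ^ card {g l, g l'}))"
    by (rule expectation_prod_Pi_pmf[where f="\<lambda>_ g. p ^ card {g l, g l'}"])
       (auto intro!: measure_pmf.integrable_const_bound[where B=1] simp: p_def power_le_one)
  also have "\<dots> = (\<Prod>i\<in>{1..k}. p\<^sup>2 + (p - p\<^sup>2) / m)"
    using assms by (intro prod.cong refl expectation_power_card_pairwise_indep) auto
  finally show ?thesis by simp
qed

lemma expectation_collision_count:
  assumes "\<And>i. i \<in> {1..k} \<Longrightarrow> pairwise_indep_family L m (F i)"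
  shows "measure_pmf.expectation (lsh_sample H F k m) (collision_count k L x y) =
           real L * measure_pmf.prob H {h. h x = h y} ^ k"
proof -
  have "measure_pmf.expectation (lsh_sample H F k m) (collision_count k L x y) =
        (\<Sum>l\<in>{1..L}. measure_pmf.prob (lsh_sample H F k m) (lsh_collision k x y l))"
    unfolding collision_count_def
    by (subst Bochner_Integration.integral_sum) (auto intro!: measure_pmf.integrable_const_bound[where B=1])
  also have "\<dots> = (\<Sum>l\<in>{1..L}. measure_pmf.prob H {h. h x = h y} ^ k)"
    using assms by (intro sum.cong refl measure_lsh_collision)
  finally show ?thesis by simp
qed

lemma sum_sum_diagonal:
  fixes a b :: real
  assumes "finite A"
  shows "(\<Sum>l\<in>A. \<Sum>l'\<in>A. if l = l' then a else b) = card A * a + card A * (real (card A) - 1) * b"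
proof -
  have "(\<Sum>l'\<in>A. if l = l' then a else b) = card A * b + (a - b)" if "l \<in> A" for l
  proof -
    have "(\<Sum>l'\<in>A. if l = l' then a else b) = (\<Sum>l'\<in>A. b + (if l = l' then a - b else 0))"
      by (intro sum.cong refl) auto
    then show ?thesis using assms that by (simp add: sum.distrib)
  qed
  then have "(\<Sum>l\<in>A. \<Sum>l'\<in>A. if l = l' then a else b) = card A * (card A * b + (a - b))"
    by simp
  then show ?thesis by (simp add: algebra_simps)
qed

lemma expectation_collision_count_sq:
  fixes H :: "('a \<Rightarrow> 'b) pmf" and x y :: 'a
  assumes "\<And>i. i \<in> {1..k} \<Longrightarrow> pairwise_indep_family L m (F i)" and "0 < m"
  defines "p \<equiv> measure_pmf.prob H {h. h x = h y}"
  shows "measure_pmf.expectation (lsh_sample H F k m) (\<lambda>\<omega>. (collision_count k L x y \<omega>)\<^sup>2) =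
           real L * p ^ k + real L * (real L - 1) * (p\<^sup>2 + (p - p\<^sup>2) / m) ^ k"
proof -
  define M where "M = lsh_sample H F k m"
  have int: "integrable (measure_pmf M) (indicator A :: _ \<Rightarrow> real)" for A
    by (intro measure_pmf.integrable_const_bound[where B=1]) auto
  have sq: "(\<lambda>\<omega>. (collision_count k L x y \<omega>)\<^sup>2) =
        (\<lambda>\<omega>. \<Sum>l\<in>{1..L}. \<Sum>l'\<in>{1..L}. indicator (lsh_collision k x y l \<inter> lsh_collision k x y l') \<omega>)"
    by (simp add: collision_count_def power2_eq_square sum_product indicator_inter_arith)
  have "measure_pmf.expectation M (\<lambda>\<omega>. (collision_count k L x y \<omega>)\<^sup>2) =
      (\<Sum>l\<in>{1..L}. measure_pmf.expectation M
         (\<lambda>\<omega>. \<Sum>l'\<in>{1..L}. indicator (lsh_collision k x y l \<inter> lsh_collision k x y l') \<omega>))"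
    unfolding sq by (intro Bochner_Integration.integral_sum Bochner_Integration.integrable_sum int)
  also have "\<dots> = (\<Sum>l\<in>{1..L}. \<Sum>l'\<in>{1..L}.
                     measure_pmf.prob M (lsh_collision k x y l \<inter> lsh_collision k x y l'))"
    by (rule sum.cong[OF refl], subst Bochner_Integration.integral_sum) (auto simp: int)
  also have "\<dots> = (\<Sum>l\<in>{1..L}. \<Sum>l'\<in>{1..L}. if l = l' then p ^ k else (p\<^sup>2 + (p - p\<^sup>2) / m) ^ k)"
  proof (intro sum.cong refl)
    fix l l' assume l: "l \<in> {1..L}" and l': "l' \<in> {1..L}"
    show "measure_pmf.prob M (lsh_collision k x y l \<inter> lsh_collision k x y l') =
          (if l = l' then p ^ k else (p\<^sup>2 + (p - p\<^sup>2) / m) ^ k)"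
      using measure_lsh_collision[where F=F and k=k and H=H and x=x and y=y, OF assms(1) l']
        measure_lsh_collision_pair[where F=F and k=k and H=H and x=x and y=y, OF assms(1) l l' _ \<open>0 < m\<close>]
      by (simp add: M_def p_def)
  qed
  finally show ?thesis by (simp add: sum_sum_diagonal M_def)
qed

lemma power_collision_pair_le:
  fixes p p1 \<epsilon> :: real
  assumes "0 < p1" "p1 \<le> p" "p \<le> 1" "0 < \<epsilon>" "0 < m"
    and m_bound: "(1 - p1) / p1 * (real k / ln (1 + \<epsilon>)) \<le> real m"
  shows "(p\<^sup>2 + (p - p\<^sup>2) / m) ^ k \<le> (1 + \<epsilon>) * p ^ (2 * k)"
proof -
  define t where "t = (1 - p) / (p * m)"
  have "0 < p" using assms by linarith
  have "(1 - p) / p \<le> (1 - p1) / p1"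
    using assms \<open>0 < p\<close> by (simp add: field_simps)
  then have "(1 - p) / p * real k / m \<le> (1 - p1) / p1 * real k / m"
    by (intro divide_right_mono mult_right_mono) auto
  moreover have "real k * t = (1 - p) / p * real k / m"
    by (simp add: t_def)
  ultimately have "real k * t \<le> (1 - p1) / p1 * real k / m"
    by simp
  also have "\<dots> \<le> ln (1 + \<epsilon>)"
  proof -
    have "(1 - p1) / p1 * real k / ln (1 + \<epsilon>) \<le> m"
      using m_bound by simp
    then have "(1 - p1) / p1 * real k \<le> m * ln (1 + \<epsilon>)"
      using \<open>0 < \<epsilon>\<close> by (subst (asm) pos_divide_le_eq) auto
    with \<open>0 < m\<close> show ?thesis
      by (subst pos_divide_le_eq) (auto simp: mult.commute)
  qed
  finally have "(1 + t) ^ k \<le> 1 + \<epsilon>"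
    using assms \<open>0 < p\<close> by (intro one_plus_power_le_of_ln) (auto simp: t_def)
  moreover have "p\<^sup>2 + (p - p\<^sup>2) / m = p\<^sup>2 * (1 + t)"
    using \<open>0 < p\<close> \<open>0 < m\<close> by (simp add: t_def field_simps power2_eq_square)
  then have "(p\<^sup>2 + (p - p\<^sup>2) / m) ^ k = p ^ (2 * k) * (1 + t) ^ k"
    by (simp add: power_mult_distrib power_mult)
  ultimately show ?thesis
    using mult_left_mono[of "(1 + t) ^ k" "1 + \<epsilon>" "p ^ (2 * k)"] \<open>0 < p\<close>
    by (simp add: mult.commute)
qed

lemma expectation_collision_count_sq_le:
  fixes H :: "('a \<Rightarrow> 'b) pmf" and x y :: 'a and p1 \<epsilon> :: real
  assumes indep: "\<And>i. i \<in> {1..k} \<Longrightarrow> pairwise_indep_family L m (F i)" and "0 < m"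
    and "0 < p1" "p1 \<le> measure_pmf.prob H {h. h x = h y}" "0 < \<epsilon>"
    and "(1 - p1) / p1 * (real k / ln (1 + \<epsilon>)) \<le> real m"
  defines "\<mu> \<equiv> real L * measure_pmf.prob H {h. h x = h y} ^ k"
  shows "measure_pmf.expectation (lsh_sample H F k m) (\<lambda>\<omega>. (collision_count k L x y \<omega>)\<^sup>2)
           \<le> \<mu> + (1 + \<epsilon>) * \<mu>\<^sup>2"
proof -
  define p where "p = measure_pmf.prob H {h. h x = h y}"
  have "0 \<le> p" "p \<le> 1" by (simp_all add: p_def)
  then have q_nonneg: "0 \<le> p\<^sup>2 + (p - p\<^sup>2) / m"
    by (intro add_nonneg_nonneg divide_nonneg_nonneg) (auto simp: power2_eq_square mult_left_le_one_le)
  have L_le: "real L * (real L - 1) \<le> real L * real L"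
    by (simp add: mult_left_mono)
  have pair_le: "(p\<^sup>2 + (p - p\<^sup>2) / m) ^ k \<le> (1 + \<epsilon>) * p ^ (2 * k)"
    using assms \<open>p \<le> 1\<close> by (intro power_collision_pair_le) (auto simp: p_def)
  have "measure_pmf.expectation (lsh_sample H F k m) (\<lambda>\<omega>. (collision_count k L x y \<omega>)\<^sup>2)
          = real L * p ^ k + real L * (real L - 1) * (p\<^sup>2 + (p - p\<^sup>2) / m) ^ k"
    unfolding p_def by (rule expectation_collision_count_sq) (use assms in auto)
  also have "\<dots> \<le> real L * p ^ k + real L * real L * ((1 + \<epsilon>) * p ^ (2 * k))"
    using q_nonneg by (intro add_left_mono mult_mono[OF L_le pair_le]) auto
  also have "\<dots> = \<mu> + (1 + \<epsilon>) * \<mu>\<^sup>2"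
    by (simp add: \<mu>_def p_def power_mult power2_eq_square algebra_simps)
  finally show ?thesis .
qed

lemma abs_collision_count_le: "\<bar>collision_count k L x y \<omega>\<bar> \<le> real L"
proof -
  have "\<bar>collision_count k L x y \<omega>\<bar> \<le> (\<Sum>l\<in>{1..L}. \<bar>indicator (lsh_collision k x y l) \<omega>\<bar>)"
    unfolding collision_count_def by (rule sum_abs)
  also have "\<dots> \<le> (\<Sum>l\<in>{1..L}. 1)"
    by (intro sum_mono) (simp add: indicator_def)
  finally show ?thesis by simp
qed

theorem lemma10:
  fixes d :: "'a \<Rightarrow> 'a \<Rightarrow> real"
    and H :: "('a \<Rightarrow> 'b) pmf"
    and F :: "nat \<Rightarrow> (nat \<Rightarrow> nat) pmf"
    and r1 r2 p1 p2 \<epsilon> :: real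
    and k L m :: nat
    and x y :: 'a
  assumes "distance_space d"
    and "r1 < r2"
    and "lsh_sensitive d r1 r2 p1 p2 H"
    and "0 < p1" and "p1 \<le> 1"
    and "0 < k" and "0 < L"
    and "0 < \<epsilon>"
    and "\<lceil>(1 - p1) / p1 * (real k / ln (1 + \<epsilon>))\<rceil> \<le> int m"
    and "1 \<le> m"
    and "\<And>i. i \<in> {1..k} \<Longrightarrow> pairwise_indep_family L m (F i)"
    and "d x y \<le> r1"
  shows
    "let p = measure_pmf.prob H {h. h x = h y};
         \<mu> = real L * p ^ k;
         hs = Pi_pmf ({1..k} \<times> {1..m}) undefined (\<lambda>_. H);
         fs = Pi_pmf {1..k} undefined F
     in measure_pmf.prob (pair_pmf hs fs)
          {(h, f). \<not> (\<exists>l\<in>{1..L}. (\<forall>i\<in>{1..k}. h (i, f i l) x = h (i, f i l) y))}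
        \<le> (1 + \<epsilon> * \<mu>) / (1 + (1 + \<epsilon>) * \<mu>)"
proof -
  define \<mu> where "\<mu> = real L * measure_pmf.prob H {h. h x = h y} ^ k"
  have "p1 \<le> measure_pmf.prob H {h. h x = h y}"
    using assms(3,12) by (simp add: lsh_sensitive_def)
  moreover have "(1 - p1) / p1 * (real k / ln (1 + \<epsilon>)) \<le> real m"
    using le_of_int_ceiling[of "(1 - p1) / p1 * (real k / ln (1 + \<epsilon>))"] assms(9) by linarith
  ultimately have second_moment:
    "measure_pmf.expectation (lsh_sample H F k m) (\<lambda>\<omega>. (collision_count k L x y \<omega>)\<^sup>2)
       \<le> \<mu> + (1 + \<epsilon>) * \<mu>\<^sup>2"
    unfolding \<mu>_def using assms(4,8,10,11) by (intro expectation_collision_count_sq_le) auto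
  have "measure_pmf.prob (lsh_sample H F k m)
               {(h, f). \<not> (\<exists>l\<in>{1..L}. \<forall>i\<in>{1..k}. h (i, f i l) x = h (i, f i l) y)}
             \<le> (1 + \<epsilon> * \<mu>) / (1 + (1 + \<epsilon>) * \<mu>)"
  proof (rule measure_pmf_zero_le_second_moment[where Z="collision_count k L x y"])
    show "measure_pmf.expectation (lsh_sample H F k m) (collision_count k L x y) = \<mu>"
      unfolding \<mu>_def by (rule expectation_collision_count) (use assms(11) in auto)
  qed (use second_moment assms(8) abs_collision_count_le in \<open>auto simp: \<mu>_def collision_count_def lsh_collision_def\<close>)
  then show ?thesis
    unfolding Let_def lsh_sample_def \<mu>_def .
qed

end
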